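(* Let $P$ be a $\mathsf{pGCL}$ program in Knievel form, let $\sigma_0=(P,\eta_0)$ be its initial program state, and let $\mathbf{o}$ be an ordinal. Suppose there exist functions $g:\mathcal{R}(\sigma_0)\to\mathbf{o}$ (the rank) and $k$ (the certification), assigning to each $\sigma\in\mathcal{R}(\sigma_0)$ a pair $k(\sigma)=(h_\sigma,\epsilon_\sigma)$ with $h_\sigma:\Sigma\to\mathbb{R}$ and $\epsilon_\sigma\in\mathbb{R}$, such that: (1) for every $\sigma\in\mathcal{R}(\sigma_0)$, $g(\sigma)=0$ if and only if $\sigma$ is terminal; (2) for every non-terminal $\sigma\in\mathcal{R}(\sigma_0)$, letting $\mathcal{L}(\sigma)=\{\sigma'\in\mathcal{R}(\sigma)\mid g(\sigma')<g(\sigma)\}$, the pair $(h_\sigma,\epsilon_\sigma)$ is an RSM-map and, for every program state $\tau\in\Sigma$, $h_\sigma(\tau)=0$ if and only if $\tau\in\mathcal{L}(\sigma)\cup(\Sigma\setminus\mathcal{R}(\sigma))$. Then $P\in\mathsf{PAST}$.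
   Context: pGCL. Fix a countable set $\mathrm{Var}$ of variables taking rational values. Programs are generated by $P ::= \bot \mid v:=e \mid P;P \mid P\oplus_p P \mid P\,[\!]\,P \mid \mathtt{while}(b)\{P\}$ ($v\in\mathrm{Var}$, $e,p$ arithmetical expressions, $b$ boolean expression, $\bot$ the empty program; $\oplus_p$ probabilistic choice, $[\!]$ nondeterministic choice). A valuation is $\eta:\mathrm{Var}\to\mathbb{Q}$. A scheduler is a total function $f:\{L_n,R_n,L_p,R_p\}^*\to\{L_n,R_n\}$; $\mathbb{F}$ is the set of schedulers. An execution state is $(P,\eta,a,w)$ with $a\in\mathbb{Q}\cap(0,1]$, $w\in\{L_n,R_n,L_p,R_p\}^*$; a program state is $(P,\eta)$, and $\Sigma$ is the set of all program states; states with program $\bot$ are terminal. For $f\in\mathbb{F}$, $\to_f$ is the smallest relation with: $(v:=e,\eta,a,w)\to_f(\bot,\eta[v\mapsto[\![e]\!]_\eta],a,w)$; if $(P_1,\eta,a,w)\to_f(P_1',\eta',a',w')$ then $(P_1;P_2,\eta,a,w)\to_f(P_1';P_2,\eta',a',w')$; $(\bot;P_2,\eta,a,w)\to_f(P_2,\eta,a,w)$; $(P_1\oplus_pP_2,\eta,a,w)\to_f(P_2,\eta,a,wR_p)$ if $[\![p]\!]_\eta\le0$, $\to_f(P_1,\eta,a,wL_p)$ if $[\![p]\!]_\eta\ge1$, and if $0<[\![p]\!]_\eta<1$ both $\to_f(P_1,\eta,a[\![p]\!]_\eta,wL_p)$ and $\to_f(P_2,\eta,a(1-[\![p]\!]_\eta),wR_p)$;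 $(P_1[\!]P_2,\eta,a,w)\to_f(P_1,\eta,a,wL_n)$ if $f(w)=L_n$, $\to_f(P_2,\eta,a,wR_n)$ if $f(w)=R_n$; $(\mathtt{while}(b)\{P\},\eta,a,w)\to_f(P;\mathtt{while}(b)\{P\},\eta,a,w)$ if $b$ holds under $\eta$, else $\to_f(\bot,\eta,a,w)$. $\to_f^n$ ($n\ge1$) is the $n$-fold composition, $\to_f^*=\bigcup_{n\ge1}\to_f^n$. For $\sigma=(P,\eta)$ let $\sigma_e=(P,\eta,1,\varepsilon)$. The initial program state of $P$ is $(P,\eta_0)$ with $\eta_0\equiv 0$. $\mathrm{Prob}((P,\eta,a,w))=a$. $T_{\le k}(\sigma,f)$ is the set of terminal execution states $\tau$ with $\sigma_e\to_f^n\tau$ for some $n\le k$; $\mathrm{ExpRuntime}(\sigma,f)=\sum_{k\in\mathbb{N}}(1-\sum_{\tau\in T_{\le k}(\sigma,f)}\mathrm{Prob}(\tau))$. $\mathsf{PAST}$ is the set of programs $P$ with $\mathrm{ExpRuntime}((P,\eta_0),f)<\infty$ for all $f\in\mathbb{F}$. Knievel form: every occurrence of probabilistic choice in the program is of the form $\mathtt{skip}\oplus_p\mathtt{exit}$, where $\mathtt{skip}$ is a fixed finite-step program doing nothing and $\mathtt{exit}$ a fixed finite-step program terminating the whole execution. Reachable states: $\mathcal{R}(\sigma)=\{(P',\eta')\in\Sigma\mid \exists f\in\mathbb{F},\ \exists a',w':\ \sigma_e\to_f^*(P',\eta',a',w')\}$. RSM-map: a pair $(h,\epsilon)$ with $h:\Sigma\to[0,\infty)$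 and real $\epsilon>0$ such that $h$ maps terminal states to $0$ and for every $\sigma=(P,\eta)$ with $h(\sigma)>0$: (i) if $\sigma$ is deterministic, i.e. there is $\sigma'=(P',\eta')$ with $(P,\eta,1,\varepsilon)\to_f(P',\eta',1,\varepsilon)$ for all $f$, then $h(\sigma')+\epsilon\le h(\sigma)$; (ii) if $\sigma$ is nondeterministic with successors $\sigma_l=(P_l,\eta_l)$, $\sigma_r=(P_r,\eta_r)$, i.e. for every $f$, $(P,\eta,1,\varepsilon)\to_f(P_l,\eta_l,1,L_n)$ or $(P,\eta,1,\varepsilon)\to_f(P_r,\eta_r,1,R_n)$, then $\max(h(\sigma_l),h(\sigma_r))+\epsilon\le h(\sigma)$; (iii) if $\sigma$ is probabilistic with probability value $p$ and successors $\sigma_l,\sigma_r$, i.e. for all $f$, $(P,\eta,1,\varepsilon)\to_f(P_l,\eta_l,p,L_p)$ and $(P,\eta,1,\varepsilon)\to_f(P_r,\eta_r,1-p,R_p)$, then $p\,h(\sigma_l)+(1-p)h(\sigma_r)+\epsilon\le h(\sigma)$. *)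

theory Defs
  imports Complex_Main "HOL-Library.Extended_Nonnegative_Real"
begin

datatype label = Ln | Rn | Lp | Rp

type_synonym vname = nat
type_synonym valuation = "vname \<Rightarrow> rat"

text \<open>Arithmetical / boolean expressions are represented semantically, by their
  evaluation functions on valuations.\<close>

datatype prog =
    Bot
  | Assign vname "valuation \<Rightarrow> rat"
  | Seq prog prog
  | PChoice prog "valuation \<Rightarrow> rat" prog
  | NChoice prog prog
  | While "valuation \<Rightarrow> bool" prog
  | Exit

definition skip :: prog where
  "skip = Assign 0 (\<lambda>\<eta>. \<eta> 0)"

type_synonym pstate = "prog \<times> valuation"
type_synonym estate = "prog \<times> valuation \<times> rat \<times> label list"

definition schedulers :: "(label list \<Rightarrow> label) set" where
  "schedulers = {f. \<forall>w. f w \<in> {Ln, Rn}}"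

inductive step :: "(label list \<Rightarrow> label) \<Rightarrow> estate \<Rightarrow> estate \<Rightarrow> bool" for f where
  assign: "step f (Assign v e, \<eta>, a, w) (Bot, \<eta>(v := e \<eta>), a, w)"
| seq: "step f (P1, \<eta>, a, w) (P1', \<eta>', a', w') \<Longrightarrow> P1 \<noteq> Exit \<Longrightarrow>
        step f (Seq P1 P2, \<eta>, a, w) (Seq P1' P2, \<eta>', a', w')"
| seq_bot: "step f (Seq Bot P2, \<eta>, a, w) (P2, \<eta>, a, w)"
| seq_exit: "step f (Seq Exit P2, \<eta>, a, w) (Exit, \<eta>, a, w)"
| exit: "step f (Exit, \<eta>, a, w) (Bot, \<eta>, a, w)"
| prob_le0: "p \<eta> \<le> 0 \<Longrightarrow> step f (PChoice P1 p P2, \<eta>, a, w) (P2, \<eta>, a, w @ [Rp])"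
| prob_ge1: "p \<eta> \<ge> 1 \<Longrightarrow> step f (PChoice P1 p P2, \<eta>, a, w) (P1, \<eta>, a, w @ [Lp])"
| prob_l: "0 < p \<eta> \<Longrightarrow> p \<eta> < 1 \<Longrightarrow>
           step f (PChoice P1 p P2, \<eta>, a, w) (P1, \<eta>, a * p \<eta>, w @ [Lp])"
| prob_r: "0 < p \<eta> \<Longrightarrow> p \<eta> < 1 \<Longrightarrow>
           step f (PChoice P1 p P2, \<eta>, a, w) (P2, \<eta>, a * (1 - p \<eta>), w @ [Rp])"
| nd_l: "f w = Ln \<Longrightarrow> step f (NChoice P1 P2, \<eta>, a, w) (P1, \<eta>, a, w @ [Ln])"
| nd_r: "f w = Rn \<Longrightarrow> step f (NChoice P1 P2, \<eta>, a, w) (P2, \<eta>, a, w @ [Rn])"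
| while_t: "b \<eta> \<Longrightarrow> step f (While b P, \<eta>, a, w) (Seq P (While b P), \<eta>, a, w)"
| while_f: "\<not> b \<eta> \<Longrightarrow> step f (While b P, \<eta>, a, w) (Bot, \<eta>, a, w)"

definition init_exec :: "pstate \<Rightarrow> estate" where
  "init_exec \<sigma> = (fst \<sigma>, snd \<sigma>, 1, [])"

definition init_state :: "prog \<Rightarrow> pstate" where
  "init_state P = (P, \<lambda>_. 0)"

definition terminal :: "pstate \<Rightarrow> bool" where
  "terminal \<sigma> \<longleftrightarrow> fst \<sigma> = Bot"

definition eprob :: "estate \<Rightarrow> rat" where
  "eprob \<tau> = fst (snd (snd \<tau>))"

definition T_le :: "pstate \<Rightarrow> (label list \<Rightarrow> label) \<Rightarrow> nat \<Rightarrow> estate set" where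
  "T_le \<sigma> f k = {\<tau>. fst \<tau> = Bot \<and> (\<exists>n\<le>k. (step f ^^ n) (init_exec \<sigma>) \<tau>)}"

definition ExpRuntime :: "pstate \<Rightarrow> (label list \<Rightarrow> label) \<Rightarrow> ennreal" where
  "ExpRuntime \<sigma> f =
     (\<Sum>k. ennreal (1 - (\<Sum>\<tau>\<in>T_le \<sigma> f k. real_of_rat (eprob \<tau>))))"

definition PAST :: "prog set" where
  "PAST = {P. \<forall>f\<in>schedulers. ExpRuntime (init_state P) f < \<infinity>}"

fun knievel :: "prog \<Rightarrow> bool" where
  "knievel Bot = True"
| "knievel (Assign v e) = True"
| "knievel (Seq P1 P2) = (knievel P1 \<and> knievel P2)"
| "knievel (PChoice P1 p P2) = (P1 = skip \<and> P2 = Exit)"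
| "knievel (NChoice P1 P2) = (knievel P1 \<and> knievel P2)"
| "knievel (While b P) = knievel P"
| "knievel Exit = True"

definition Reach :: "pstate \<Rightarrow> pstate set" where
  "Reach \<sigma> = {(P', \<eta>'). \<exists>f\<in>schedulers. \<exists>a' w'.
                 (step f)\<^sup>*\<^sup>* (init_exec \<sigma>) (P', \<eta>', a', w')}"

definition rsm_map :: "(pstate \<Rightarrow> real) \<Rightarrow> real \<Rightarrow> bool" where
  "rsm_map h \<epsilon> \<longleftrightarrow>
     \<epsilon> > 0 \<and> (\<forall>\<sigma>. 0 \<le> h \<sigma>) \<and> (\<forall>\<sigma>. terminal \<sigma> \<longrightarrow> h \<sigma> = 0) \<and>
     (\<forall>P \<eta>. h (P, \<eta>) > 0 \<longrightarrow>
        \<comment> \<open>(i) deterministic states\<close>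
        (\<forall>P' \<eta>'. (\<forall>f\<in>schedulers. step f (P, \<eta>, 1, []) (P', \<eta>', 1, [])) \<longrightarrow>
            h (P', \<eta>') + \<epsilon> \<le> h (P, \<eta>)) \<and>
        \<comment> \<open>(ii) nondeterministic states\<close>
        (\<forall>Pl \<eta>l Pr \<eta>r. (\<forall>f\<in>schedulers. step f (P, \<eta>, 1, []) (Pl, \<eta>l, 1, [Ln]) \<or>
                                       step f (P, \<eta>, 1, []) (Pr, \<eta>r, 1, [Rn])) \<longrightarrow>
            max (h (Pl, \<eta>l)) (h (Pr, \<eta>r)) + \<epsilon> \<le> h (P, \<eta>)) \<and>
        \<comment> \<open>(iii) probabilistic states, probability value p (clipped to [0,1])\<close>
        (\<forall>(p::rat) Pl \<eta>l Pr \<eta>r. 0 \<le> p \<and> p \<le> 1 \<and>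
            (\<forall>f\<in>schedulers. (0 < p \<longrightarrow> step f (P, \<eta>, 1, []) (Pl, \<eta>l, p, [Lp])) \<and>
                             (p < 1 \<longrightarrow> step f (P, \<eta>, 1, []) (Pr, \<eta>r, 1 - p, [Rp]))) \<longrightarrow>
            real_of_rat p * h (Pl, \<eta>l) + (1 - real_of_rat p) * h (Pr, \<eta>r) + \<epsilon> \<le> h (P, \<eta>)))"

end

theory Submission
  imports Defs
begin

(* In Knievel form every probabilistic choice is skip or exit, so under a fixed scheduler the
   execution tree is a single main run, which always takes the skip branch, together with exit
   branches that split off from it and terminate after at most seq_depth P + 2 further steps.
   Hence the probability of not having terminated after kk steps is at most
   (seq_depth P + 2) times the mass still alive on the main run at step kk - seq_depth P - 1,
   and it suffices to show that this live mass is summable. That follows by well-founded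
   induction on the rank. Along the main run from a non-terminal state sigma, the certificate h of
   sigma, weighted by the probability mass of the run, drops by at least eps times that mass in
   every step in which it is positive. So either h stays positive, and then the live mass from
   sigma on sums to at most mass * h sigma / eps, or h vanishes at some later state, which then has
   lower rank than sigma. *)

(* The main run: a probabilistic choice with 0 < p < 1 takes its left branch, which in Knievel form
   is skip. Its right branch, which is exit, is given by exit_succ. *)
fun main_succ :: "(label list \<Rightarrow> label) \<Rightarrow> estate \<Rightarrow> estate" where
  "main_succ f (Bot, \<eta>, a, w) = (Bot, \<eta>, a, w)"
| "main_succ f (Assign v e, \<eta>, a, w) = (Bot, \<eta>(v := e \<eta>), a, w)"
| "main_succ f (Seq P1 P2, \<eta>, a, w) =
     (if P1 = Bot then (P2, \<eta>, a, w) else if P1 = Exit then (Exit, \<eta>, a, w)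
      else (case main_succ f (P1, \<eta>, a, w) of (P1', \<eta>', a', w') \<Rightarrow> (Seq P1' P2, \<eta>', a', w')))"
| "main_succ f (PChoice P1 p P2, \<eta>, a, w) =
     (if p \<eta> \<le> 0 then (P2, \<eta>, a, w @ [Rp])
      else if 1 \<le> p \<eta> then (P1, \<eta>, a, w @ [Lp]) else (P1, \<eta>, a * p \<eta>, w @ [Lp]))"
| "main_succ f (NChoice P1 P2, \<eta>, a, w) =
     (if f w = Ln then (P1, \<eta>, a, w @ [Ln]) else (P2, \<eta>, a, w @ [Rn]))"
| "main_succ f (While b P, \<eta>, a, w) =
     (if b \<eta> then (Seq P (While b P), \<eta>, a, w) else (Bot, \<eta>, a, w))"
| "main_succ f (Exit, \<eta>, a, w) = (Bot, \<eta>, a, w)"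

fun exit_succ :: "estate \<Rightarrow> estate option" where
  "exit_succ (Seq P1 P2, \<eta>, a, w) =
     (if P1 = Bot \<or> P1 = Exit then None
      else map_option (\<lambda>(P1', \<eta>', a', w'). (Seq P1' P2, \<eta>', a', w')) (exit_succ (P1, \<eta>, a, w)))"
| "exit_succ (PChoice P1 p P2, \<eta>, a, w) =
     (if 0 < p \<eta> \<and> p \<eta> < 1 then Some (P2, \<eta>, a * (1 - p \<eta>), w @ [Rp]) else None)"
| "exit_succ _ = None"

(* Bounds the number of Seq layers around the Exit that an exit branch starts from, and does not
   grow along the main run. *)
fun seq_depth :: "prog \<Rightarrow> nat" where
  "seq_depth (Seq A B) = max (Suc (seq_depth A)) (seq_depth B)"
| "seq_depth (PChoice A p B) = max (seq_depth A) (seq_depth B)"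
| "seq_depth (NChoice A B) = max (seq_depth A) (seq_depth B)"
| "seq_depth (While b A) = Suc (seq_depth A)"
| "seq_depth _ = 0"

inductive exiting :: "prog \<Rightarrow> nat \<Rightarrow> bool" where
  exiting_Exit: "exiting Exit 0"
| exiting_Seq: "exiting A d \<Longrightarrow> exiting (Seq A B) (Suc d)"

fun rebase :: "rat \<Rightarrow> label list \<Rightarrow> estate \<Rightarrow> estate" where
  "rebase a w (Q, \<eta>, r, v) = (Q, \<eta>, a * r, w @ v)"

lemma rebase_rebase: "rebase a w (rebase r v x) = rebase (a * r) (w @ v) x"
  by (cases x) (simp add: mult.assoc)

lemma schedulers_shift: "f \<in> schedulers \<Longrightarrow> (\<lambda>v. f (w @ v)) \<in> schedulers"
  by (simp add: schedulers_def)

lemma main_succ_Bot: "fst x = Bot \<Longrightarrow> main_succ f x = x"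
  by (cases x) auto

lemma exit_succ_Bot: "fst x = Bot \<Longrightarrow> exit_succ x = None"
  by (cases x) auto

lemma step_main_succ:
  assumes "f \<in> schedulers"
  shows "Q \<noteq> Bot \<Longrightarrow> step f (Q, \<eta>, a, w) (main_succ f (Q, \<eta>, a, w))"
proof (induction Q arbitrary: \<eta> a w)
  case (Seq P1 P2)
  show ?case
  proof (cases "P1 = Bot \<or> P1 = Exit")
    case True
    then show ?thesis by (auto intro: step.intros)
  next
    case False
    obtain P1' \<eta>' a' w' where succ: "main_succ f (P1, \<eta>, a, w) = (P1', \<eta>', a', w')"
      by (cases "main_succ f (P1, \<eta>, a, w)") auto
    with Seq.IH(1)[of \<eta> a w] False have "step f (P1, \<eta>, a, w) (P1', \<eta>', a', w')" by simp
    with False succ show ?thesis by (auto intro: step.seq)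
  qed
next
  case (NChoice P1 P2)
  have "f w = Ln \<or> f w = Rn" using assms by (auto simp: schedulers_def)
  then show ?case by (auto intro: step.intros)
qed (auto intro: step.intros)

lemma step_exit_succ: "exit_succ (Q, \<eta>, a, w) = Some y \<Longrightarrow> step f (Q, \<eta>, a, w) y"
proof (induction Q arbitrary: y)
  case (Seq P1 P2)
  then obtain P1' \<eta>' a' w' where "exit_succ (P1, \<eta>, a, w) = Some (P1', \<eta>', a', w')"
    and "P1 \<noteq> Exit" and "y = (Seq P1' P2, \<eta>', a', w')"
    by (auto split: if_splits)
  with Seq.IH(1) show ?case by (auto intro: step.seq)
qed (auto intro: step.intros split: if_splits)

lemma main_succ_rebase:
  "main_succ f (Q, \<eta>, a, w) = rebase a w (main_succ (\<lambda>v. f (w @ v)) (Q, \<eta>, 1, []))"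
  by (induction Q arbitrary: \<eta> a w) (auto split: prod.split)

lemma main_succ_invariants:
  assumes "main_succ f (Q, \<eta>, a, w) = (Q', \<eta>', a', w')"
  shows "(exit_succ (Q, \<eta>, a, w) = None \<longrightarrow> a' = a) \<and> (0 < a \<longrightarrow> 0 < a') \<and>
    seq_depth Q' \<le> seq_depth Q \<and> (knievel Q \<longrightarrow> knievel Q')"
  using assms
proof (induction Q arbitrary: Q' \<eta>' a' w')
  case (Seq P1 P2)
  show ?case
  proof (cases "P1 = Bot \<or> P1 = Exit")
    case True
    with Seq.prems show ?thesis by auto
  next
    case False
    obtain P1' \<eta>1 a1 w1 where succ: "main_succ f (P1, \<eta>, a, w) = (P1', \<eta>1, a1, w1)"
      by (cases "main_succ f (P1, \<eta>, a, w)") auto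
    with Seq.prems False have "Q' = Seq P1' P2" "\<eta>1 = \<eta>'" "a1 = a'" "w1 = w'" by auto
    with Seq.IH(1)[OF succ] False show ?thesis by auto
  qed
qed (auto simp: skip_def split: if_splits)

lemma exit_succ_split:
  assumes "exit_succ (Q, \<eta>, a, w) = Some (Q', \<eta>', a', w')"
    and "main_succ f (Q, \<eta>, a, w) = (Q'', \<eta>'', a'', w'')"
  shows "a' + a'' = a \<and> \<eta>' = \<eta> \<and> w' = w @ [Rp] \<and> w'' = w @ [Lp] \<and> (0 < a \<longrightarrow> 0 < a' \<and> 0 < a'')"
  using assms
proof (induction Q arbitrary: Q' Q'' \<eta>' \<eta>'' a' a'' w' w'')
  case (Seq P1 P2)
  from Seq.prems(1) obtain P1' where "P1 \<noteq> Bot" "P1 \<noteq> Exit"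
    and exit: "exit_succ (P1, \<eta>, a, w) = Some (P1', \<eta>', a', w')"
    by (auto split: if_splits)
  moreover obtain P1'' \<eta>1 a1 w1 where main: "main_succ f (P1, \<eta>, a, w) = (P1'', \<eta>1, a1, w1)"
    by (cases "main_succ f (P1, \<eta>, a, w)") auto
  ultimately have "\<eta>1 = \<eta>''" "a1 = a''" "w1 = w''" using Seq.prems(2) by auto
  with Seq.IH(1)[OF exit main] show ?case by simp
next
  case (PChoice P1 p P2)
  then have "0 < p \<eta>" "p \<eta> < 1" "a' = a * (1 - p \<eta>)" "a'' = a * p \<eta>"
    "\<eta>' = \<eta>" "\<eta>'' = \<eta>" "w' = w @ [Rp]" "w'' = w @ [Lp]"
    by (auto split: if_splits)
  then show ?case by (simp add: ring_distribs)
qed auto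

lemma exit_succ_exiting:
  "exit_succ (Q, \<eta>, a, w) = Some (Q', \<eta>', a', w') \<Longrightarrow> knievel Q \<Longrightarrow> \<exists>d\<le>seq_depth Q. exiting Q' d"
proof (induction Q arbitrary: Q' \<eta>' a' w')
  case (Seq P1 P2)
  from Seq.prems(1) obtain P1' where exit: "exit_succ (P1, \<eta>, a, w) = Some (P1', \<eta>', a', w')"
    and "Q' = Seq P1' P2"
    by (auto split: if_splits)
  moreover obtain d where "d \<le> seq_depth P1" "exiting P1' d"
    using Seq.IH(1)[OF exit] Seq.prems(2) by auto
  ultimately show ?case by (intro exI[of _ "Suc d"]) (auto intro: exiting_Seq)
next
  case (PChoice P1 p P2)
  then show ?case by (auto intro: exiting_Exit split: if_splits)
qed simp_all

lemma exiting_step: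
  "exiting Q (Suc d) \<Longrightarrow> \<exists>Q'. step f (Q, \<eta>, a, w) (Q', \<eta>, a, w) \<and> exiting Q' d"
proof (induction Q arbitrary: d)
  case (Seq A B)
  then have A: "exiting A d" by (auto elim: exiting.cases)
  show ?case
  proof (cases d)
    case 0
    with A have "A = Exit" by (auto elim: exiting.cases)
    with 0 show ?thesis by (auto intro: step.intros exiting_Exit)
  next
    case (Suc d')
    with Seq.IH(1) A obtain A' where "step f (A, \<eta>, a, w) (A', \<eta>, a, w)" "exiting A' d'" by blast
    moreover have "A \<noteq> Exit" using A Suc by (auto elim: exiting.cases)
    ultimately show ?thesis using Suc by (auto intro: step.seq exiting_Seq)
  qed
qed (auto elim: exiting.cases)

lemma exiting_terminates: "exiting Q d \<Longrightarrow> (step f ^^ Suc d) (Q, \<eta>, a, w) (Bot, \<eta>, a, w)"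
proof (induction d arbitrary: Q)
  case 0
  then have "Q = Exit" by (auto elim: exiting.cases)
  then show ?case by (auto intro: step.exit)
next
  case (Suc d)
  then obtain Q' where "step f (Q, \<eta>, a, w) (Q', \<eta>, a, w)" "exiting Q' d"
    using exiting_step by blast
  with Suc.IH show ?case by (meson relpowp_Suc_I2)
qed

(* One rule per clause of rsm_map, recording a successor together with its probability; of a
   probabilistic state only the left successor is recorded, unless the left branch has
   probability 0. *)
inductive rsm_succ :: "prog \<Rightarrow> valuation \<Rightarrow> rat \<Rightarrow> prog \<Rightarrow> valuation \<Rightarrow> bool" where
  det: "\<forall>g\<in>schedulers. step g (Q, \<eta>, 1, []) (Q', \<eta>', 1, []) \<Longrightarrow> rsm_succ Q \<eta> 1 Q' \<eta>'"
| nondet: "\<forall>g\<in>schedulers.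
      step g (Q, \<eta>, 1, []) (Pl, \<eta>l, 1, [Ln]) \<or> step g (Q, \<eta>, 1, []) (Pr, \<eta>r, 1, [Rn])
    \<Longrightarrow> (Q', \<eta>') \<in> {(Pl, \<eta>l), (Pr, \<eta>r)} \<Longrightarrow> rsm_succ Q \<eta> 1 Q' \<eta>'"
| prob_left: "0 < p \<Longrightarrow> p \<le> 1 \<Longrightarrow>
    \<forall>g\<in>schedulers. step g (Q, \<eta>, 1, []) (Q', \<eta>', p, [Lp]) \<and>
                   (p < 1 \<longrightarrow> step g (Q, \<eta>, 1, []) (Pr, \<eta>r, 1 - p, [Rp]))
    \<Longrightarrow> rsm_succ Q \<eta> p Q' \<eta>'"
| prob_right: "\<forall>g\<in>schedulers. step g (Q, \<eta>, 1, []) (Q', \<eta>', 1, [Rp]) \<Longrightarrow> rsm_succ Q \<eta> 1 Q' \<eta>'"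

lemma rsm_map_rsm_succ:
  assumes rsm: "rsm_map h \<epsilon>" and succ: "rsm_succ Q \<eta> r Q' \<eta>'" and pos: "0 < h (Q, \<eta>)"
  shows "real_of_rat r * h (Q', \<eta>') + \<epsilon> \<le> h (Q, \<eta>)"
  using succ
proof cases
  case det
  with rsm pos show ?thesis unfolding rsm_map_def by auto
next
  case (nondet Pl \<eta>l Pr \<eta>r)
  with rsm pos have "max (h (Pl, \<eta>l)) (h (Pr, \<eta>r)) + \<epsilon> \<le> h (Q, \<eta>)"
    unfolding rsm_map_def by blast
  with nondet show ?thesis by auto
next
  case (prob_left Pr \<eta>r)
  with rsm pos have
    "real_of_rat r * h (Q', \<eta>') + (1 - real_of_rat r) * h (Pr, \<eta>r) + \<epsilon> \<le> h (Q, \<eta>)"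
    unfolding rsm_map_def by (meson less_imp_le)
  moreover have "0 \<le> (1 - real_of_rat r) * h (Pr, \<eta>r)"
    using rsm \<open>r \<le> 1\<close> by (simp add: rsm_map_def of_rat_less_eq)
  ultimately show ?thesis by linarith
next
  case prob_right
  then have "\<forall>g\<in>schedulers. (0 < (0::rat) \<longrightarrow> step g (Q, \<eta>, 1, []) (Q', \<eta>', 0, [Lp])) \<and>
      ((0::rat) < 1 \<longrightarrow> step g (Q, \<eta>, 1, []) (Q', \<eta>', 1 - 0, [Rp]))"
    by simp
  moreover have "(0::rat) \<le> 0" "(0::rat) \<le> 1" by simp_all
  ultimately have "real_of_rat 0 * h (Q', \<eta>') + (1 - real_of_rat 0) * h (Q', \<eta>') + \<epsilon> \<le> h (Q, \<eta>)"
    using rsm pos unfolding rsm_map_def by blast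
  with prob_right show ?thesis by simp
qed

lemma rsm_succ_Seq:
  assumes "rsm_succ P1 \<eta> r P1' \<eta>'" "P1 \<noteq> Exit"
  shows "rsm_succ (Seq P1 P2) \<eta> r (Seq P1' P2) \<eta>'"
  using assms(1)
proof cases
  case det
  with assms(2) show ?thesis by (blast intro: rsm_succ.det step.seq)
next
  case (nondet Pl \<eta>l Pr \<eta>r)
  have "rsm_succ (Seq P1 P2) \<eta> 1 (Seq P1' P2) \<eta>'"
    using nondet(2,3) assms(2)
    by (intro rsm_succ.nondet[of _ _ "Seq Pl P2" \<eta>l "Seq Pr P2" \<eta>r]) (auto intro: step.seq)
  with nondet(1) show ?thesis by simp
next
  case (prob_left Pr \<eta>r)
  with assms(2) show ?thesis
    by (intro rsm_succ.prob_left[of _ _ _ _ _ "Seq Pr P2" \<eta>r]) (auto intro: step.seq)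
next
  case prob_right
  with assms(2) show ?thesis by (blast intro: rsm_succ.prob_right step.seq)
qed

lemma rsm_succ_PChoice:
  assumes "main_succ f (PChoice P1 p P2, \<eta>, 1, []) = (Q', \<eta>', r, v)"
  shows "rsm_succ (PChoice P1 p P2) \<eta> r Q' \<eta>'"
proof -
  consider "p \<eta> \<le> 0" | "1 \<le> p \<eta>" | "0 < p \<eta>" "p \<eta> < 1" by linarith
  then show ?thesis
  proof cases
    case 1
    then have "\<forall>g. step g (PChoice P1 p P2, \<eta>, 1, []) (P2, \<eta>, 1, [Rp])"
      using step.prob_le0[of p \<eta> _ P1 P2 1 "[]"] by simp
    with 1 assms show ?thesis by (auto intro: rsm_succ.prob_right)
  next
    case 2
    then have "\<forall>g. step g (PChoice P1 p P2, \<eta>, 1, []) (P1, \<eta>, 1, [Lp])"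
      using step.prob_ge1[of p \<eta> _ P1 P2 1 "[]"] by simp
    with 2 assms show ?thesis by (auto intro: rsm_succ.prob_left)
  next
    case 3
    then have "\<forall>g. step g (PChoice P1 p P2, \<eta>, 1, []) (P1, \<eta>, p \<eta>, [Lp])"
      "\<forall>g. step g (PChoice P1 p P2, \<eta>, 1, []) (P2, \<eta>, 1 - p \<eta>, [Rp])"
      using step.prob_l[of p \<eta> _ P1 P2 1 "[]"] step.prob_r[of p \<eta> _ P1 P2 1 "[]"] by simp_all
    with 3 assms show ?thesis by (auto intro: rsm_succ.prob_left)
  qed
qed

lemma rsm_succ_NChoice:
  assumes "f \<in> schedulers" "main_succ f (NChoice P1 P2, \<eta>, 1, []) = (Q', \<eta>', r, v)"
  shows "rsm_succ (NChoice P1 P2) \<eta> r Q' \<eta>'"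
proof -
  have "\<forall>g\<in>schedulers. step g (NChoice P1 P2, \<eta>, 1, []) (P1, \<eta>, 1, [Ln]) \<or>
                       step g (NChoice P1 P2, \<eta>, 1, []) (P2, \<eta>, 1, [Rn])"
  proof
    fix g assume "g \<in> schedulers"
    then have "g [] = Ln \<or> g [] = Rn" by (simp add: schedulers_def)
    then show "step g (NChoice P1 P2, \<eta>, 1, []) (P1, \<eta>, 1, [Ln]) \<or>
               step g (NChoice P1 P2, \<eta>, 1, []) (P2, \<eta>, 1, [Rn])"
      using step.nd_l[of g "[]"] step.nd_r[of g "[]"] by auto
  qed
  with assms(2) show ?thesis by (auto intro: rsm_succ.nondet split: if_splits)
qed

lemma rsm_succ_main_succ:
  assumes "f \<in> schedulers"
  shows "Q \<noteq> Bot \<Longrightarrow> main_succ f (Q, \<eta>, 1, []) = (Q', \<eta>', r, v) \<Longrightarrow> rsm_succ Q \<eta> r Q' \<eta>'"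
proof (induction Q arbitrary: Q' \<eta>' r v)
  case (Seq P1 P2)
  show ?case
  proof (cases "P1 = Bot \<or> P1 = Exit")
    case True
    with Seq.prems show ?thesis by (auto intro!: rsm_succ.det intro: step.intros)
  next
    case False
    obtain P1' \<eta>1 r1 v1 where succ: "main_succ f (P1, \<eta>, 1, []) = (P1', \<eta>1, r1, v1)"
      by (cases "main_succ f (P1, \<eta>, 1, [])") auto
    with Seq.prems False have "Q' = Seq P1' P2" "\<eta>1 = \<eta>'" "r1 = r" by auto
    with Seq.IH(1)[OF _ succ] False show ?thesis by (auto intro: rsm_succ_Seq)
  qed
next
  case (PChoice P1 p P2)
  show ?case using PChoice.prems(2) by (rule rsm_succ_PChoice)
next
  case (NChoice P1 P2)
  show ?case using assms NChoice.prems(2) by (rule rsm_succ_NChoice)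
qed (auto intro!: rsm_succ.det intro: step.intros split: if_splits)

lemma rsm_map_main_succ:
  assumes rsm: "rsm_map h \<epsilon>" and "f \<in> schedulers" and pos: "0 < h (Q, \<eta>)" and "0 \<le> a"
    and succ: "main_succ f (Q, \<eta>, a, w) = (Q', \<eta>', a', w')"
  shows "real_of_rat a' * h (Q', \<eta>') + real_of_rat a * \<epsilon> \<le> real_of_rat a * h (Q, \<eta>)"
proof -
  have "Q \<noteq> Bot" using rsm pos by (auto simp: rsm_map_def terminal_def)
  obtain r v where root: "main_succ (\<lambda>v. f (w @ v)) (Q, \<eta>, 1, []) = (Q', \<eta>', r, v)"
    and "a' = a * r"
    using succ main_succ_rebase[of f Q \<eta> a w]
    by (cases "main_succ (\<lambda>v. f (w @ v)) (Q, \<eta>, 1, [])") auto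
  have "rsm_succ Q \<eta> r Q' \<eta>'"
    using rsm_succ_main_succ[OF schedulers_shift[OF \<open>f \<in> schedulers\<close>] \<open>Q \<noteq> Bot\<close> root] .
  then have "real_of_rat r * h (Q', \<eta>') + \<epsilon> \<le> h (Q, \<eta>)"
    using rsm_map_rsm_succ[OF rsm _ pos] by blast
  then have "real_of_rat a * (real_of_rat r * h (Q', \<eta>') + \<epsilon>) \<le> real_of_rat a * h (Q, \<eta>)"
    using \<open>0 \<le> a\<close> by (simp add: mult_left_mono)
  then show ?thesis using \<open>a' = a * r\<close> by (simp add: of_rat_mult algebra_simps)
qed

definition run :: "(label list \<Rightarrow> label) \<Rightarrow> estate \<Rightarrow> nat \<Rightarrow> estate" where
  "run f x n = (main_succ f ^^ n) x"

lemma run_0 [simp]: "run f x 0 = x"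
  by (simp add: run_def)

lemma run_Suc: "run f x (Suc n) = main_succ f (run f x n)"
  by (simp add: run_def)

lemma run_Bot_stays: "fst (run f x i) = Bot \<Longrightarrow> i \<le> n \<Longrightarrow> run f x n = run f x i"
proof (induction n)
  case (Suc n)
  then show ?case by (cases "i = Suc n") (auto simp: run_Suc main_succ_Bot le_Suc_eq)
qed simp

lemma step_run_Suc:
  assumes "f \<in> schedulers" "fst (run f x n) \<noteq> Bot"
  shows "step f (run f x n) (run f x (Suc n))"
  using assms step_main_succ[OF assms(1)] by (cases "run f x n") (simp add: run_Suc)

lemma relpowp_run:
  assumes "f \<in> schedulers"
  shows "fst (run f x n) \<noteq> Bot \<Longrightarrow> (step f ^^ n) x (run f x n)"
proof (induction n)
  case (Suc n)
  then have "fst (run f x n) \<noteq> Bot" by (metis main_succ_Bot run_Suc)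
  with Suc.IH step_run_Suc[OF assms] show ?case by (meson relpowp_Suc_I)
qed simp

lemma relpowp_run_le:
  assumes "f \<in> schedulers"
  shows "\<exists>m\<le>n. (step f ^^ m) x (run f x n)"
proof (induction n)
  case (Suc n)
  show ?case
  proof (cases "fst (run f x n) = Bot")
    case True
    with Suc show ?thesis by (metis le_SucI main_succ_Bot run_Suc)
  next
    case False
    then have "(step f ^^ Suc n) x (run f x (Suc n))"
      using relpowp_run[OF assms False] step_run_Suc[OF assms False] by auto
    then show ?thesis by blast
  qed
qed simp

lemma run_rebase:
  assumes "run f x n = (Q, \<eta>, a, w)"
  shows "run f x (n + j) = rebase a w (run (\<lambda>v. f (w @ v)) (Q, \<eta>, 1, []) j)"
proof (induction j)
  case 0
  with assms show ?case by simp
next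
  case (Suc j)
  obtain Q' \<eta>' r v where run': "run (\<lambda>v. f (w @ v)) (Q, \<eta>, 1, []) j = (Q', \<eta>', r, v)"
    by (cases "run (\<lambda>v. f (w @ v)) (Q, \<eta>, 1, []) j") auto
  have "run f x (n + Suc j) = main_succ f (Q', \<eta>', a * r, w @ v)"
    using Suc run' by (simp add: run_Suc)
  also have "\<dots> = rebase a w (rebase r v (main_succ (\<lambda>u. f (w @ v @ u)) (Q', \<eta>', 1, [])))"
    by (subst main_succ_rebase) (simp add: rebase_rebase)
  also have "\<dots> = rebase a w (run (\<lambda>v. f (w @ v)) (Q, \<eta>, 1, []) (Suc j))"
    using run' main_succ_rebase[of "\<lambda>u. f (w @ u)" Q' \<eta>' r v] by (simp add: run_Suc)
  finally show ?case .
qed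

lemma run_Reach:
  assumes "f \<in> schedulers" "run f x n = (Q, \<eta>, a, w)" "n \<le> m"
  shows "(fst (run f x m), fst (snd (run f x m))) \<in> Reach (Q, \<eta>)"
proof -
  obtain j where m: "m = n + j" using assms(3) le_Suc_ex by blast
  let ?f = "\<lambda>v. f (w @ v)"
  obtain Q' \<eta>' r v where run': "run ?f (Q, \<eta>, 1, []) j = (Q', \<eta>', r, v)"
    by (cases "run ?f (Q, \<eta>, 1, []) j") auto
  have "(step ?f)\<^sup>*\<^sup>* (Q, \<eta>, 1, []) (Q', \<eta>', r, v)"
    using relpowp_run_le[OF schedulers_shift[OF assms(1)]] run' by (metis relpowp_imp_rtranclp)
  moreover have "run f x m = (Q', \<eta>', a * r, w @ v)"
    using run_rebase[OF assms(2), of j] run' m by simp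
  ultimately show ?thesis
    using schedulers_shift[OF assms(1)] by (auto simp: Reach_def init_exec_def)
qed

lemma run_trace_prefix:
  assumes "run f x n = (Q, \<eta>, a, w)" "n \<le> m"
  shows "\<exists>v. snd (snd (snd (run f x m))) = w @ v"
proof -
  obtain j where "m = n + j" using assms(2) le_Suc_ex by blast
  then show ?thesis
    using run_rebase[OF assms(1), of j] by (cases "run (\<lambda>v. f (w @ v)) (Q, \<eta>, 1, []) j") auto
qed

fun successors :: "estate \<Rightarrow> estate set" where
  "successors (Bot, \<eta>, a, w) = {}"
| "successors (Assign v e, \<eta>, a, w) = {(Bot, \<eta>(v := e \<eta>), a, w)}"
| "successors (Seq P1 P2, \<eta>, a, w) =
     (\<lambda>(P1', \<eta>', a', w'). (Seq P1' P2, \<eta>', a', w')) ` successors (P1, \<eta>, a, w)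
     \<union> {(P2, \<eta>, a, w), (Exit, \<eta>, a, w)}"
| "successors (PChoice P1 p P2, \<eta>, a, w) = {(P2, \<eta>, a, w @ [Rp]), (P1, \<eta>, a, w @ [Lp]),
     (P1, \<eta>, a * p \<eta>, w @ [Lp]), (P2, \<eta>, a * (1 - p \<eta>), w @ [Rp])}"
| "successors (NChoice P1 P2, \<eta>, a, w) = {(P1, \<eta>, a, w @ [Ln]), (P2, \<eta>, a, w @ [Rn])}"
| "successors (While b P, \<eta>, a, w) = {(Seq P (While b P), \<eta>, a, w), (Bot, \<eta>, a, w)}"
| "successors (Exit, \<eta>, a, w) = {(Bot, \<eta>, a, w)}"

lemma step_successors: "step f x y \<Longrightarrow> y \<in> successors x"
  by (induction rule: step.induct) (auto intro: rev_image_eqI)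

lemma finite_successors: "finite (successors x)"
proof -
  have "finite (successors (Q, \<eta>, a, w))" for Q \<eta> a w
    by (induction Q arbitrary: \<eta> a w) auto
  then show ?thesis by (cases x) simp
qed

lemma finite_relpowp_image: "finite {y. (step f ^^ n) x y}"
proof (induction n)
  case (Suc n)
  have "{y. (step f ^^ Suc n) x y} \<subseteq> (\<Union>z\<in>{y. (step f ^^ n) x y}. successors z)"
    by (auto elim!: relpowp_Suc_E dest: step_successors)
  with Suc finite_successors show ?case by (meson finite_UN_I finite_subset)
qed simp

lemma finite_T_le: "finite (T_le \<sigma> f k)"
proof -
  have "T_le \<sigma> f k \<subseteq> (\<Union>n\<le>k. {y. (step f ^^ n) (init_exec \<sigma>) y})"
    by (auto simp: T_le_def)
  then show ?thesis using finite_relpowp_image by (meson finite_UN_I finite_atMost finite_subset)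
qed

lemma relpowp_eprob_pos: "(step f ^^ n) x y \<Longrightarrow> 0 < eprob x \<Longrightarrow> 0 < eprob y"
proof (induction n arbitrary: y)
  case (Suc n)
  have "step f z y \<Longrightarrow> 0 < eprob z \<Longrightarrow> 0 < eprob y" for z
    by (induction rule: step.induct) (auto simp: eprob_def)
  with Suc show ?case by (auto elim!: relpowp_Suc_E)
qed simp

lemma T_le_eprob_pos: "\<tau> \<in> T_le \<sigma> f k \<Longrightarrow> 0 < eprob \<tau>"
  by (auto simp: T_le_def init_exec_def eprob_def dest!: relpowp_eprob_pos)

locale certified_run =
  fixes P :: prog and g :: "pstate \<Rightarrow> 'o::wellorder" and k :: "pstate \<Rightarrow> (pstate \<Rightarrow> real) \<times> real"
    and f :: "label list \<Rightarrow> label"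
  assumes knievel_P: "knievel P"
    and certificate: "\<forall>\<sigma>\<in>Reach (init_state P). \<not> terminal \<sigma> \<longrightarrow>
           rsm_map (fst (k \<sigma>)) (snd (k \<sigma>)) \<and>
           (\<forall>\<tau>. fst (k \<sigma>) \<tau> = 0 \<longleftrightarrow> \<tau> \<in> {\<sigma>' \<in> Reach \<sigma>. g \<sigma>' < g \<sigma>} \<union> (UNIV - Reach \<sigma>))"
    and scheduler: "f \<in> schedulers"
begin

abbreviation exec :: "nat \<Rightarrow> estate" where
  "exec \<equiv> run f (init_exec (init_state P))"

definition state_at :: "nat \<Rightarrow> pstate" where
  "state_at n = (fst (exec n), fst (snd (exec n)))"

definition trace_at :: "nat \<Rightarrow> label list" where
  "trace_at n = snd (snd (snd (exec n)))"

definition mass :: "nat \<Rightarrow> real" where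
  "mass n = real_of_rat (eprob (exec n))"

definition live_mass :: "nat \<Rightarrow> real" where
  "live_mass n = (if fst (exec n) = Bot then 0 else mass n)"

definition exit_mass :: "nat \<Rightarrow> real" where
  "exit_mass n = (case exit_succ (exec n) of None \<Rightarrow> 0 | Some y \<Rightarrow> real_of_rat (eprob y))"

definition exit_end :: "nat \<Rightarrow> estate" where
  "exit_end n = (case exit_succ (exec n) of Some (Q, \<eta>, a, w) \<Rightarrow> (Bot, \<eta>, a, w))"

lemma exec_0: "exec 0 = (P, \<lambda>_. 0, 1, [])"
  by (simp add: init_exec_def init_state_def)

lemma exec_eq: "exec n = (fst (state_at n), snd (state_at n), eprob (exec n), trace_at n)"
  by (cases "exec n") (simp add: state_at_def trace_at_def eprob_def)

lemma state_at_Reach_init: "state_at n \<in> Reach (init_state P)"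
  using run_Reach[OF scheduler exec_0, of n] by (simp add: state_at_def init_state_def)

lemma state_at_Reach: "i \<le> m \<Longrightarrow> state_at m \<in> Reach (state_at i)"
  using run_Reach[OF scheduler exec_eq[of i]] by (simp add: state_at_def)

lemma trace_at_prefix: "n \<le> m \<Longrightarrow> \<exists>v. trace_at m = trace_at n @ v"
  using run_trace_prefix[OF exec_eq[of n]] by (simp add: trace_at_def)

lemma exec_invariants:
  "0 < eprob (exec n) \<and> knievel (fst (exec n)) \<and> seq_depth (fst (exec n)) \<le> seq_depth P"
proof (induction n)
  case 0
  show ?case using knievel_P by (simp add: init_exec_def init_state_def eprob_def)
next
  case (Suc n)
  obtain Q \<eta> a w where exec: "exec n = (Q, \<eta>, a, w)" by (cases "exec n") auto
  obtain Q' \<eta>' a' w' where succ: "main_succ f (Q, \<eta>, a, w) = (Q', \<eta>', a', w')"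
    by (cases "main_succ f (Q, \<eta>, a, w)") auto
  with exec have "exec (Suc n) = (Q', \<eta>', a', w')" by (simp add: run_Suc)
  with main_succ_invariants[OF succ] Suc exec show ?case by (auto simp: eprob_def)
qed

lemma mass_pos: "0 < mass n"
  using exec_invariants by (simp add: mass_def)

lemma live_mass_nonneg: "0 \<le> live_mass n"
  using mass_pos[of n] by (simp add: live_mass_def)

lemma live_mass_le_mass: "live_mass n \<le> mass n"
  using mass_pos[of n] by (simp add: live_mass_def)

lemma rsm_telescope:
  assumes rsm: "rsm_map h \<epsilon>"
  shows "i \<le> j \<Longrightarrow> \<forall>m. i \<le> m \<longrightarrow> m < j \<longrightarrow> 0 < h (state_at m) \<Longrightarrow>
    mass j * h (state_at j) + \<epsilon> * (\<Sum>m\<in>{i..<j}. mass m) \<le> mass i * h (state_at i)"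
proof (induction j)
  case (Suc j)
  show ?case
  proof (cases "i = Suc j")
    case False
    with Suc.prems have "i \<le> j" by simp
    with Suc have IH: "mass j * h (state_at j) + \<epsilon> * (\<Sum>m\<in>{i..<j}. mass m) \<le> mass i * h (state_at i)"
      and pos: "0 < h (state_at j)"
      by simp_all
    obtain Q \<eta> a w where exec: "exec j = (Q, \<eta>, a, w)" by (cases "exec j") auto
    obtain Q' \<eta>' a' w' where succ: "main_succ f (Q, \<eta>, a, w) = (Q', \<eta>', a', w')"
      by (cases "main_succ f (Q, \<eta>, a, w)") auto
    have "0 \<le> a" using exec_invariants[of j] exec by (simp add: eprob_def)
    with pos exec have "real_of_rat a' * h (Q', \<eta>') + real_of_rat a * \<epsilon> \<le> real_of_rat a * h (Q, \<eta>)"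
      using rsm_map_main_succ[OF rsm scheduler _ _ succ] by (simp add: state_at_def)
    moreover have "exec (Suc j) = (Q', \<eta>', a', w')" using exec succ by (simp add: run_Suc)
    ultimately have "mass (Suc j) * h (state_at (Suc j)) + mass j * \<epsilon> \<le> mass j * h (state_at j)"
      using exec by (simp add: mass_def state_at_def eprob_def)
    with IH \<open>i \<le> j\<close> show ?thesis by (simp add: algebra_simps)
  qed simp
qed simp

lemma live_mass_sum_le_certificate:
  assumes rsm: "rsm_map h \<epsilon>" and pos: "\<forall>m. i \<le> m \<longrightarrow> m < j \<longrightarrow> 0 < h (state_at m)"
  shows "(\<Sum>m\<in>{i..<j}. live_mass m) \<le> mass i * h (state_at i) / \<epsilon>"
proof -
  have h_nonneg: "\<And>\<sigma>. 0 \<le> h \<sigma>" and "0 < \<epsilon>" using rsm by (auto simp: rsm_map_def)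
  have bound_nonneg: "0 \<le> mass i * h (state_at i) / \<epsilon>"
    using mass_pos[of i] h_nonneg[of "state_at i"] \<open>0 < \<epsilon>\<close> by simp
  show ?thesis
  proof (cases "i \<le> j")
    case True
    have "0 \<le> mass j * h (state_at j)" using mass_pos[of j] h_nonneg[of "state_at j"] by simp
    with rsm_telescope[OF rsm True pos] have "\<epsilon> * (\<Sum>m\<in>{i..<j}. mass m) \<le> mass i * h (state_at i)"
      by linarith
    with \<open>0 < \<epsilon>\<close> have "(\<Sum>m\<in>{i..<j}. mass m) \<le> mass i * h (state_at i) / \<epsilon>"
      by (simp add: field_simps)
    moreover have "(\<Sum>m\<in>{i..<j}. live_mass m) \<le> (\<Sum>m\<in>{i..<j}. mass m)"
      by (rule sum_mono) (rule live_mass_le_mass)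
    ultimately show ?thesis by linarith
  qed (use bound_nonneg in simp)
qed

lemma live_mass_tail_bounded_or_rank_drops:
  assumes "\<not> terminal (state_at i)"
  shows "(\<exists>C. \<forall>N. (\<Sum>n\<in>{i..<N}. live_mass n) \<le> C) \<or> (\<exists>j\<ge>i. g (state_at j) < g (state_at i))"
proof -
  define h where "h = fst (k (state_at i))"
  define \<epsilon> where "\<epsilon> = snd (k (state_at i))"
  have rsm: "rsm_map h \<epsilon>"
    and h_zero: "\<And>\<tau>. h \<tau> = 0 \<longleftrightarrow>
      \<tau> \<in> {\<sigma>' \<in> Reach (state_at i). g \<sigma>' < g (state_at i)} \<union> (UNIV - Reach (state_at i))"
    using certificate state_at_Reach_init[of i] assms unfolding h_def \<epsilon>_def by blast+
  have h_nonneg: "\<And>\<sigma>. 0 \<le> h \<sigma>" using rsm unfolding rsm_map_def by blast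
  show ?thesis
  proof (cases "\<exists>j\<ge>i. h (state_at j) = 0")
    case True
    then obtain j where "i \<le> j" "h (state_at j) = 0" by blast
    then have "g (state_at j) < g (state_at i)" using h_zero state_at_Reach by blast
    with \<open>i \<le> j\<close> show ?thesis by blast
  next
    case False
    then have "\<forall>m. i \<le> m \<longrightarrow> m < N \<longrightarrow> 0 < h (state_at m)" for N
      using h_nonneg by (metis less_eq_real_def)
    then show ?thesis using live_mass_sum_le_certificate[OF rsm] by blast
  qed
qed

lemma live_mass_tail_bounded: "\<exists>C. \<forall>N. (\<Sum>n\<in>{i..<N}. live_mass n) \<le> C"
proof (induction "g (state_at i)" arbitrary: i rule: less_induct)
  case less
  show ?case
  proof (cases "terminal (state_at i)")
    case True
    then have "live_mass n = 0" if "i \<le> n" for n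
      using run_Bot_stays[OF _ that] by (simp add: live_mass_def terminal_def state_at_def)
    then show ?thesis by (intro exI[of _ 0]) simp
  next
    case False
    from live_mass_tail_bounded_or_rank_drops[OF False] show ?thesis
    proof
      assume "\<exists>j\<ge>i. g (state_at j) < g (state_at i)"
      then obtain j where "i \<le> j" "g (state_at j) < g (state_at i)" by blast
      with less obtain C where C: "\<forall>N. (\<Sum>n\<in>{j..<N}. live_mass n) \<le> C" by blast
      have "(\<Sum>n\<in>{i..<N}. live_mass n) \<le> (\<Sum>n\<in>{i..<j}. live_mass n) + C" for N
      proof -
        have "(\<Sum>n\<in>{i..<N}. live_mass n) \<le> (\<Sum>n\<in>{i..<max N j}. live_mass n)"
          by (rule sum_mono2) (auto simp: live_mass_nonneg)
        also have "\<dots> = (\<Sum>n\<in>{i..<j}. live_mass n) + (\<Sum>n\<in>{j..<max N j}. live_mass n)"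
          using \<open>i \<le> j\<close> by (simp add: sum.atLeastLessThan_concat)
        also have "\<dots> \<le> (\<Sum>n\<in>{i..<j}. live_mass n) + C" using C by simp
        finally show ?thesis .
      qed
      then show ?thesis by blast
    qed
  qed
qed

lemma summable_live_mass: "summable live_mass"
proof -
  obtain C where "\<forall>N. (\<Sum>n\<in>{0..<N}. live_mass n) \<le> C" using live_mass_tail_bounded[of 0] by blast
  then show ?thesis
    by (intro summableI_nonneg_bounded[of _ C]) (auto simp: live_mass_nonneg atLeast0LessThan)
qed

lemma exit_branch:
  assumes exit: "exit_succ (exec n) = Some (Q', \<eta>', a', w')"
  shows exit_branch_exiting: "\<exists>d\<le>seq_depth P. exiting Q' d"
    and exit_branch_step: "step f (exec n) (Q', \<eta>', a', w')"
    and exit_branch_trace: "w' = trace_at n @ [Rp]" "trace_at (Suc n) = trace_at n @ [Lp]"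
    and exit_branch_end: "exit_mass n = real_of_rat a'" "exit_end n = (Bot, \<eta>', a', w')"
    and exit_branch_mass: "mass (Suc n) + exit_mass n = mass n" "0 < a'"
proof -
  obtain Q \<eta> a w where exec: "exec n = (Q, \<eta>, a, w)" by (cases "exec n") auto
  obtain Q'' \<eta>'' a'' w'' where succ: "main_succ f (Q, \<eta>, a, w) = (Q'', \<eta>'', a'', w'')"
    by (cases "main_succ f (Q, \<eta>, a, w)") auto
  have exec_Suc: "exec (Suc n) = (Q'', \<eta>'', a'', w'')" using exec succ by (simp add: run_Suc)
  have inv: "0 < a" "knievel Q" "seq_depth Q \<le> seq_depth P"
    using exec_invariants[of n] exec by (auto simp: eprob_def)
  have exit': "exit_succ (Q, \<eta>, a, w) = Some (Q', \<eta>', a', w')" using exit exec by simp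
  note split = exit_succ_split[OF exit' succ]
  show "\<exists>d\<le>seq_depth P. exiting Q' d"
    using exit_succ_exiting[OF exit' inv(2)] inv(3) by (meson le_trans)
  show "step f (exec n) (Q', \<eta>', a', w')" using step_exit_succ[OF exit'] exec by simp
  show "w' = trace_at n @ [Rp]" "trace_at (Suc n) = trace_at n @ [Lp]"
    using split exec exec_Suc by (simp_all add: trace_at_def)
  show "exit_mass n = real_of_rat a'" "exit_end n = (Bot, \<eta>', a', w')"
    using exit by (simp_all add: exit_mass_def exit_end_def eprob_def)
  then show "mass (Suc n) + exit_mass n = mass n"
    using split exec exec_Suc by (simp add: mass_def eprob_def flip: of_rat_add)
  show "0 < a'" using split inv by simp
qed

lemma mass_step: "mass (Suc n) + exit_mass n = mass n"
proof (cases "exit_succ (exec n)")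
  case None
  obtain Q \<eta> a w where exec: "exec n = (Q, \<eta>, a, w)" by (cases "exec n") auto
  obtain Q' \<eta>' a' w' where succ: "main_succ f (Q, \<eta>, a, w) = (Q', \<eta>', a', w')"
    by (cases "main_succ f (Q, \<eta>, a, w)") auto
  have "a' = a" using main_succ_invariants[OF succ] None exec by simp
  with None exec succ show ?thesis by (simp add: run_Suc mass_def exit_mass_def eprob_def)
qed (auto intro: exit_branch_mass)

lemma mass_conservation: "mass n + (\<Sum>m<n. exit_mass m) = 1"
proof (induction n)
  case 0
  show ?case by (simp add: mass_def init_exec_def eprob_def)
next
  case (Suc n)
  then show ?case using mass_step[of n] by simp
qed

lemma exit_mass_nonneg: "0 \<le> exit_mass n"
proof (cases "exit_succ (exec n)")
  case (Some y)
  then obtain Q' \<eta>' a' w' where "exit_succ (exec n) = Some (Q', \<eta>', a', w')" by (cases y) auto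
  from exit_branch_end(1)[OF this] exit_branch_mass(2)[OF this] show ?thesis by simp
qed (simp add: exit_mass_def)

lemma exit_succ_exec_not_Bot: "exit_succ (exec n) \<noteq> None \<Longrightarrow> fst (exec n) \<noteq> Bot"
  using exit_succ_Bot by metis

lemma exit_mass_le_live_mass: "exit_mass n \<le> live_mass n"
proof (cases "exit_succ (exec n)")
  case (Some y)
  then have "fst (exec n) \<noteq> Bot" by (intro exit_succ_exec_not_Bot) simp
  with mass_step[of n] mass_pos[of "Suc n"] show ?thesis by (simp add: live_mass_def)
qed (simp add: exit_mass_def live_mass_nonneg)

lemma live_mass_antimono: "m \<le> n \<Longrightarrow> live_mass n \<le> live_mass m"
proof -
  have "live_mass (Suc n) \<le> live_mass n" for n
  proof (cases "fst (exec (Suc n)) = Bot")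
    case False
    then have "fst (exec n) \<noteq> Bot" by (metis main_succ_Bot run_Suc)
    with False mass_step[of n] exit_mass_nonneg[of n] show ?thesis by (simp add: live_mass_def)
  qed (simp add: live_mass_def live_mass_nonneg[of n, unfolded live_mass_def])
  then show "m \<le> n \<Longrightarrow> live_mass n \<le> live_mass m" by (simp add: decseq_SucI decseqD)
qed

lemma exec_in_T_le: "fst (exec n) = Bot \<Longrightarrow> exec n \<in> T_le (init_state P) f n"
  using relpowp_run_le[OF scheduler] by (auto simp: T_le_def)

lemma exit_end_in_T_le:
  assumes "exit_succ (exec n) \<noteq> None" "n + seq_depth P + 2 \<le> kk"
  shows "exit_end n \<in> T_le (init_state P) f kk"
proof -
  obtain Q' \<eta>' a' w' where exit: "exit_succ (exec n) = Some (Q', \<eta>', a', w')"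
    using assms(1) by auto
  obtain d where "d \<le> seq_depth P" "exiting Q' d" using exit_branch_exiting[OF exit] by blast
  have "fst (exec n) \<noteq> Bot" using assms(1) by (rule exit_succ_exec_not_Bot)
  then have "(step f ^^ n) (init_exec (init_state P)) (exec n)" by (rule relpowp_run[OF scheduler])
  moreover have "(step f ^^ Suc (Suc d)) (exec n) (exit_end n)"
    using relpowp_Suc_I2[OF exit_branch_step[OF exit] exiting_terminates[OF \<open>exiting Q' d\<close>]]
      exit_branch_end(2)[OF exit] by simp
  ultimately have "(step f ^^ (n + Suc (Suc d))) (init_exec (init_state P)) (exit_end n)"
    unfolding relpowp_add by (rule relcomppI)
  moreover have "n + Suc (Suc d) \<le> kk" using assms(2) \<open>d \<le> seq_depth P\<close> by simp
  moreover have "fst (exit_end n) = Bot" using exit_branch_end(2)[OF exit] by simp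
  ultimately show ?thesis unfolding T_le_def by blast
qed

lemma exit_end_trace:
  assumes "exit_succ (exec n) \<noteq> None"
  shows "snd (snd (snd (exit_end n))) = trace_at n @ [Rp]"
    and "\<forall>m>n. \<exists>v. trace_at m = trace_at n @ Lp # v"
proof -
  obtain Q' \<eta>' a' w' where exit: "exit_succ (exec n) = Some (Q', \<eta>', a', w')"
    using assms by auto
  show "snd (snd (snd (exit_end n))) = trace_at n @ [Rp]" using exit_branch_trace(1)[OF exit] exit_branch_end(2)[OF exit] by simp
  show "\<forall>m>n. \<exists>v. trace_at m = trace_at n @ Lp # v"
    using trace_at_prefix[of "Suc n"] exit_branch_trace(2)[OF exit] by (auto simp: Suc_le_eq)
qed

lemma inj_on_exit_end: "inj_on exit_end {n. exit_succ (exec n) \<noteq> None}"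
proof -
  have ne: "exit_end n \<noteq> exit_end m"
    if exit_n: "exit_succ (exec n) \<noteq> None" and exit_m: "exit_succ (exec m) \<noteq> None" and "n < m"
    for n m
  proof
    assume "exit_end n = exit_end m"
    then have "trace_at n @ [Rp] = trace_at m @ [Rp]"
      using exit_end_trace(1)[OF exit_n] exit_end_trace(1)[OF exit_m] by simp
    moreover obtain v where "trace_at m = trace_at n @ Lp # v"
      using exit_end_trace(2)[OF exit_n] \<open>n < m\<close> by blast
    ultimately show False by simp
  qed
  show ?thesis
  proof (rule inj_onI)
    fix n m
    assume "n \<in> {n. exit_succ (exec n) \<noteq> None}" "m \<in> {n. exit_succ (exec n) \<noteq> None}"
      and "exit_end n = exit_end m"
    then show "n = m" using ne[of n m] ne[of m n] by (cases n m rule: linorder_cases) auto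
  qed
qed

lemma exit_end_ne_exec:
  assumes "exit_succ (exec n) \<noteq> None" "n < m"
  shows "exit_end n \<noteq> exec m"
proof
  assume "exit_end n = exec m"
  then have "trace_at m = trace_at n @ [Rp]"
    using exit_end_trace(1)[OF assms(1)] by (simp add: trace_at_def)
  moreover obtain v where "trace_at m = trace_at n @ Lp # v"
    using exit_end_trace(2)[OF assms(1)] assms(2) by blast
  ultimately show False by simp
qed

definition early_exits :: "nat \<Rightarrow> nat set" where
  "early_exits kk = {n. exit_succ (exec n) \<noteq> None \<and> n + seq_depth P + 2 \<le> kk}"

lemma T_le_mass_ge:
  "mass kk - live_mass kk + (\<Sum>n\<in>early_exits kk. exit_mass n)
     \<le> (\<Sum>\<tau>\<in>T_le (init_state P) f kk. real_of_rat (eprob \<tau>))"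
proof -
  let ?T = "T_le (init_state P) f kk" and ?E = "early_exits kk" and ?p = "\<lambda>\<tau>. real_of_rat (eprob \<tau>)"
  define M where "M = (if fst (exec kk) = Bot then {exec kk} else {})"
  have "finite ?E" unfolding early_exits_def by (rule finite_subset[of _ "{..kk}"]) auto
  have "exit_end n \<noteq> exec kk" if "n \<in> ?E" for n
    using that exit_end_ne_exec by (simp add: early_exits_def)
  then have "exec kk \<notin> exit_end ` ?E" by (metis imageE)
  then have disjoint: "M \<inter> exit_end ` ?E = {}" by (simp add: M_def)
  have "M \<subseteq> ?T" using exec_in_T_le[of kk] by (simp add: M_def)
  moreover have "exit_end ` ?E \<subseteq> ?T" using exit_end_in_T_le by (auto simp: early_exits_def)
  ultimately have subset: "M \<union> exit_end ` ?E \<subseteq> ?T" by blast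
  have "sum ?p M = mass kk - live_mass kk" by (simp add: M_def mass_def live_mass_def)
  moreover have "sum ?p (exit_end ` ?E) = (\<Sum>n\<in>?E. exit_mass n)"
  proof (subst sum.reindex)
    show "inj_on exit_end ?E"
      by (rule inj_on_subset[OF inj_on_exit_end]) (auto simp: early_exits_def)
    show "sum (?p \<circ> exit_end) ?E = (\<Sum>n\<in>?E. exit_mass n)"
    proof (rule sum.cong)
      fix n assume "n \<in> ?E"
      then obtain Q' \<eta>' a' w' where exit: "exit_succ (exec n) = Some (Q', \<eta>', a', w')"
        by (auto simp: early_exits_def)
      show "(?p \<circ> exit_end) n = exit_mass n"
        using exit_branch_end[OF exit] by (simp add: eprob_def)
    qed simp
  qed
  moreover have "sum ?p (M \<union> exit_end ` ?E) = sum ?p M + sum ?p (exit_end ` ?E)"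
    using disjoint \<open>finite ?E\<close> by (intro sum.union_disjoint) (auto simp: M_def)
  moreover have "sum ?p (M \<union> exit_end ` ?E) \<le> sum ?p ?T"
  proof (rule sum_mono2[OF finite_T_le subset])
    fix \<tau> assume "\<tau> \<in> ?T - (M \<union> exit_end ` ?E)"
    then show "0 \<le> ?p \<tau>" by (meson DiffD1 T_le_eprob_pos less_imp_le zero_less_of_rat_iff)
  qed
  ultimately show ?thesis by linarith
qed

lemma late_exit_mass_le:
  "(\<Sum>n\<in>{..<kk} - early_exits kk. exit_mass n)
     \<le> real (seq_depth P + 1) * live_mass (kk - (seq_depth P + 1))"
proof -
  let ?w = "seq_depth P + 1"
  let ?c = "live_mass (kk - ?w)"
  have "exit_mass n \<le> (if kk - ?w \<le> n then ?c else 0)" if "n \<in> {..<kk} - early_exits kk" for n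
  proof (cases "exit_succ (exec n) = None")
    case False
    with that have "kk - ?w \<le> n" by (auto simp: early_exits_def)
    then show ?thesis using exit_mass_le_live_mass[of n] live_mass_antimono[of "kk - ?w" n] by simp
  qed (simp add: exit_mass_def live_mass_nonneg)
  then have "(\<Sum>n\<in>{..<kk} - early_exits kk. exit_mass n)
      \<le> (\<Sum>n\<in>{..<kk} - early_exits kk. if kk - ?w \<le> n then ?c else 0)"
    by (rule sum_mono)
  also have "\<dots> \<le> (\<Sum>n\<in>{..<kk}. if kk - ?w \<le> n then ?c else 0)"
    by (rule sum_mono2) (auto simp: live_mass_nonneg)
  also have "\<dots> = (\<Sum>n\<in>{n\<in>{..<kk}. kk - ?w \<le> n}. ?c)"
    by (rule sum.inter_filter[symmetric]) simp
  also have "{n\<in>{..<kk}. kk - ?w \<le> n} = {kk - ?w..<kk}" by auto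
  also have "(\<Sum>n\<in>{kk - ?w..<kk}. ?c) = real (kk - (kk - ?w)) * ?c" by simp
  also have "\<dots> \<le> real ?w * ?c" using live_mass_nonneg by (intro mult_right_mono) auto
  finally show ?thesis .
qed

lemma unterminated_mass_le:
  "1 - (\<Sum>\<tau>\<in>T_le (init_state P) f kk. real_of_rat (eprob \<tau>))
     \<le> real (seq_depth P + 2) * live_mass (kk - (seq_depth P + 1))"
proof -
  let ?c = "live_mass (kk - (seq_depth P + 1))"
  have "(\<Sum>n<kk. exit_mass n)
      = (\<Sum>n\<in>{..<kk} - early_exits kk. exit_mass n) + (\<Sum>n\<in>early_exits kk. exit_mass n)"
    by (rule sum.subset_diff) (auto simp: early_exits_def)
  moreover have "live_mass kk \<le> ?c" by (rule live_mass_antimono) simp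
  moreover have "real (seq_depth P + 2) * ?c = real (seq_depth P + 1) * ?c + ?c"
    by (simp add: algebra_simps)
  ultimately show ?thesis
    using mass_conservation[of kk] T_le_mass_ge[of kk] late_exit_mass_le[of kk] by linarith
qed

lemma ExpRuntime_finite: "ExpRuntime (init_state P) f < \<infinity>"
proof -
  define b where "b kk = real (seq_depth P + 2) * live_mass (kk - (seq_depth P + 1))" for kk
  have "summable (\<lambda>n. live_mass (n + (seq_depth P + 1) - (seq_depth P + 1)))"
    using summable_live_mass by simp
  then have "summable (\<lambda>n. live_mass (n - (seq_depth P + 1)))"
    by (subst summable_iff_shift[symmetric, of _ "seq_depth P + 1"])
  then have "summable b" unfolding b_def by (rule summable_mult)
  have b_nonneg: "0 \<le> b kk" for kk by (simp add: b_def live_mass_nonneg)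
  have "ExpRuntime (init_state P) f \<le> (\<Sum>kk. ennreal (b kk))"
    unfolding ExpRuntime_def
    by (rule suminf_le) (use unterminated_mass_le in \<open>auto simp: b_def intro!: ennreal_leI\<close>)
  also have "\<dots> = ennreal (suminf b)" using suminf_ennreal2[OF b_nonneg \<open>summable b\<close>] .
  finally show ?thesis by (simp add: le_less_trans)
qed

end

theorem theorem5p8:
  fixes P :: prog
    and g :: "pstate \<Rightarrow> 'o::{wellorder, order_bot}"
    and k :: "pstate \<Rightarrow> (pstate \<Rightarrow> real) \<times> real"
  assumes "knievel P"
    and "\<forall>\<sigma>\<in>Reach (init_state P). g \<sigma> = bot \<longleftrightarrow> terminal \<sigma>"
    and "\<forall>\<sigma>\<in>Reach (init_state P). \<not> terminal \<sigma> \<longrightarrow>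
           rsm_map (fst (k \<sigma>)) (snd (k \<sigma>)) \<and>
           (\<forall>\<tau>. fst (k \<sigma>) \<tau> = 0 \<longleftrightarrow>
                 \<tau> \<in> {\<sigma>' \<in> Reach \<sigma>. g \<sigma>' < g \<sigma>} \<union> (UNIV - Reach \<sigma>))"
  shows "P \<in> PAST"
proof -
  have "ExpRuntime (init_state P) f < \<infinity>" if "f \<in> schedulers" for f
  proof -
    interpret certified_run P g k f using assms(1,3) that by unfold_locales
    show ?thesis by (rule ExpRuntime_finite)
  qed
  then show ?thesis by (simp add: PAST_def)
qed

end
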